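(* Let $q$ be a prime power and let $\{P_i\}$ be an infinite family of toric codes over $\mathbb{F}_q$, with $P_i\subseteq[0,q-2]^{n_i}$. If $\{L(P_i)\}$ is unbounded, then $\delta(P_i)\to0$ as $i\to\infty$.
   Context: For an integral convex polytope $P\subseteq[0,q-2]^n$: $\mathcal{L}_P=\mathrm{span}_{\mathbb{F}_q}\{x^p: p\in P\cap\mathbb{Z}^n\}$, $N(P)=\max_{0\neq f\in\mathcal{L}_P}|Z(f)|$ with $Z(f)$ the zero set of $f$ in $(\mathbb{F}_q^\times)^n$, $\delta(P)=\big((q-1)^n-N(P)\big)/(q-1)^n$, and $R(P)=|P\cap\mathbb{Z}^n|/(q-1)^n$. A sequence of nonempty integral convex polytopes $P_i\subseteq[0,q-2]^{n_i}$ is an infinite family of toric codes if $n_i\to\infty$ and $\delta(P_i)\to\delta$, $R(P_i)\to R$ for some $\delta,R\in[0,1]$. The Minkowski length $\ell(P)$ of a lattice polytope is the largest number of summands in a decomposition $P=P_1+\dots+P_\ell$ (Minkowski sum) into lattice polytopes of positive dimension ($\ell=0$ for a point); the full Minkowski length is $L(P)=\max\{\ell(Q):Q\subseteq P\text{ a lattice polytope}\}$. *)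

theory Defs
  imports Complex_Main
begin

text \<open>Points of R^n are represented as functions nat => real that vanish at
  all coordinates j >= n; lattice points as functions nat => int likewise.\<close>

definition supp_in :: "nat \<Rightarrow> (nat \<Rightarrow> 'b::zero) \<Rightarrow> bool" where
  "supp_in n v \<longleftrightarrow> (\<forall>j\<ge>n. v j = 0)"

definition real_pt :: "(nat \<Rightarrow> int) \<Rightarrow> (nat \<Rightarrow> real)" where
  "real_pt v = (\<lambda>j. real_of_int (v j))"

definition conv_hull_pts :: "(nat \<Rightarrow> int) set \<Rightarrow> (nat \<Rightarrow> real) set" where
  "conv_hull_pts V = {x. \<exists>u. (\<forall>v\<in>V. u v \<ge> 0) \<and> sum u V = 1 \<and>
                          x = (\<lambda>j. \<Sum>v\<in>V. u v * real_of_int (v j))}"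

definition lattice_polytope :: "nat \<Rightarrow> (nat \<Rightarrow> real) set \<Rightarrow> bool" where
  "lattice_polytope n P \<longleftrightarrow> (\<exists>V. finite V \<and> V \<noteq> {} \<and> (\<forall>v\<in>V. supp_in n v) \<and>
                                  P = conv_hull_pts V)"

definition lattice_points :: "nat \<Rightarrow> (nat \<Rightarrow> real) set \<Rightarrow> (nat \<Rightarrow> int) set" where
  "lattice_points n P = {p. supp_in n p \<and> real_pt p \<in> P}"

definition pos_dim :: "(nat \<Rightarrow> real) set \<Rightarrow> bool" where
  "pos_dim P \<longleftrightarrow> (\<exists>x\<in>P. \<exists>y\<in>P. x \<noteq> y)"

fun msum :: "(nat \<Rightarrow> real) set list \<Rightarrow> (nat \<Rightarrow> real) set" where
  "msum [] = {\<lambda>_. 0}"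
| "msum (P # Ps) = {(\<lambda>j. x j + y j) | x y. x \<in> P \<and> y \<in> msum Ps}"

definition minkowski_length :: "nat \<Rightarrow> (nat \<Rightarrow> real) set \<Rightarrow> nat" where
  "minkowski_length n P = Sup {l. \<exists>Ps. length Ps = l \<and>
      (\<forall>Q\<in>set Ps. lattice_polytope n Q \<and> pos_dim Q) \<and> P = msum Ps}"

definition full_minkowski_length :: "nat \<Rightarrow> (nat \<Rightarrow> real) set \<Rightarrow> nat" where
  "full_minkowski_length n P =
     Sup {minkowski_length n Q | Q. lattice_polytope n Q \<and> Q \<subseteq> P}"

definition torus :: "nat \<Rightarrow> (nat \<Rightarrow> 'a::field) set" where
  "torus n = {x. (\<forall>j<n. x j \<noteq> 0) \<and> (\<forall>j\<ge>n. x j = 1)}"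

definition toric_eval :: "nat \<Rightarrow> (nat \<Rightarrow> real) set \<Rightarrow> ((nat \<Rightarrow> int) \<Rightarrow> 'a::field)
                          \<Rightarrow> (nat \<Rightarrow> 'a) \<Rightarrow> 'a" where
  "toric_eval n P c x = (\<Sum>p\<in>lattice_points n P. c p * (\<Prod>j<n. x j ^ nat (p j)))"

definition zero_count :: "nat \<Rightarrow> (nat \<Rightarrow> real) set \<Rightarrow> ((nat \<Rightarrow> int) \<Rightarrow> 'a::field) \<Rightarrow> nat" where
  "zero_count n P c = card {x \<in> torus n. toric_eval n P c x = 0}"

definition toric_N :: "'a::{field,finite} itself \<Rightarrow> nat \<Rightarrow> (nat \<Rightarrow> real) set \<Rightarrow> nat" where
  "toric_N _ n P = Sup {zero_count n P (c :: (nat \<Rightarrow> int) \<Rightarrow> 'a) | c.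
                          \<exists>p\<in>lattice_points n P. c p \<noteq> 0}"

definition toric_delta :: "'a::{field,finite} itself \<Rightarrow> nat \<Rightarrow> (nat \<Rightarrow> real) set \<Rightarrow> real" where
  "toric_delta (T :: 'a itself) n P =
     ((real (card (UNIV :: 'a set)) - 1) ^ n - real (toric_N T n P)) / (real (card (UNIV :: 'a set)) - 1) ^ n"

definition toric_rate :: "'a::{field,finite} itself \<Rightarrow> nat \<Rightarrow> (nat \<Rightarrow> real) set \<Rightarrow> real" where
  "toric_rate (T :: 'a itself) n P = real (card (lattice_points n P)) / (real (card (UNIV :: 'a set)) - 1) ^ n"

definition in_box :: "nat \<Rightarrow> nat \<Rightarrow> (nat \<Rightarrow> real) set \<Rightarrow> bool" where
  "in_box q n P \<longleftrightarrow> (\<forall>x\<in>P. \<forall>j<n. 0 \<le> x j \<and> x j \<le> real q - 2)"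

end

theory Submission
  imports Defs "HOL-Library.FuncSet"
begin

text \<open>Suppose \<open>P\<close> contains a Minkowski sum \<open>Q_0 + ... + Q_(m-1)\<close> of positive-dimensional lattice
  polytopes. Pick lattice points \<open>a_k, b_k \<in> Q_k\<close>, ordered so that every \<open>b_k - a_k\<close> is
  lexicographically positive, and consider \<open>f = x^(a_0 + ... + a_(m-1)) * prod_k (x^(b_k - a_k) - \<gamma>_k)\<close>.
  All its monomials \<open>x^(sum of one of a_k, b_k per k)\<close> lie in \<open>P\<close>, and the lexicographic
  ordering makes the coefficient of \<open>x^(b_0 + ... + b_(m-1))\<close> equal to 1, so \<open>0 \<noteq> f \<in> L_P\<close>.
  Choosing the \<open>\<gamma>_k\<close> one at a time by pigeonhole, the non-zeros of \<open>f\<close> on the torus shrink by a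
  factor \<open>r = 1 - 1/(q-1)\<close> per factor, hence \<open>\<delta>(P) \<le> r^m\<close>. If \<open>L(P_i)\<close> is unbounded, the limit
  of \<open>\<delta>(P_i)\<close> is therefore below every power of \<open>r < 1\<close>.\<close>

definition laurent_monomial :: "nat \<Rightarrow> (nat \<Rightarrow> int) \<Rightarrow> (nat \<Rightarrow> 'a::field) \<Rightarrow> 'a" where
  "laurent_monomial n p x = (\<Prod>j<n. power_int (x j) (p j))"

lemma power_int_sum:
  fixes x :: "'a::field"
  assumes "x \<noteq> 0"
  shows "power_int x (\<Sum>k\<in>K. e k) = (\<Prod>k\<in>K. power_int x (e k))"
  by (induction K rule: infinite_finite_induct) (auto simp: power_int_add assms)

lemma laurent_monomial_nonzero: "x \<in> torus n \<Longrightarrow> laurent_monomial n p x \<noteq> 0"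
  by (auto simp: laurent_monomial_def torus_def)

lemma laurent_monomial_add:
  assumes "x \<in> torus n"
  shows "laurent_monomial n (\<lambda>j. p j + p' j) x = laurent_monomial n p x * laurent_monomial n p' x"
  using assms by (auto simp: laurent_monomial_def torus_def power_int_add prod.distrib intro!: prod.cong)

lemma laurent_monomial_sum:
  assumes "x \<in> torus n"
  shows "laurent_monomial n (\<lambda>j. \<Sum>k\<in>K. p k j) x = (\<Prod>k\<in>K. laurent_monomial n (p k) x)"
proof -
  have "laurent_monomial n (\<lambda>j. \<Sum>k\<in>K. p k j) x = (\<Prod>j<n. \<Prod>k\<in>K. power_int (x j) (p k j))"
    using assms by (auto simp: laurent_monomial_def torus_def power_int_sum intro!: prod.cong)
  also have "\<dots> = (\<Prod>k\<in>K. laurent_monomial n (p k) x)"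
    unfolding laurent_monomial_def by (rule prod.swap)
  finally show ?thesis .
qed

text \<open>\<open>toric_eval\<close> uses the exponents \<open>nat (p j)\<close>, so it agrees with the Laurent monomials only
  on nonnegative lattice points.\<close>
lemma toric_eval_eq_laurent:
  assumes "\<And>p j. p \<in> lattice_points n P \<Longrightarrow> j < n \<Longrightarrow> 0 \<le> p j"
  shows "toric_eval n P c x = (\<Sum>p\<in>lattice_points n P. c p * laurent_monomial n p x)"
  unfolding toric_eval_def laurent_monomial_def
  by (intro sum.cong refl arg_cong[where f = "(*) _"] prod.cong)
     (simp_all add: assms power_int_def)

definition lex_pos :: "(nat \<Rightarrow> int) \<Rightarrow> bool" where
  "lex_pos d \<longleftrightarrow> (\<exists>k. 0 < d k \<and> (\<forall>j<k. d j = 0))"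

lemma lex_pos_add:
  assumes "lex_pos d" "lex_pos e"
  shows "lex_pos (\<lambda>j. d j + e j)"
proof -
  obtain k where k: "0 < d k" "\<forall>j<k. d j = 0" using assms(1) lex_pos_def by blast
  obtain l where l: "0 < e l" "\<forall>j<l. e j = 0" using assms(2) lex_pos_def by blast
  show ?thesis
    unfolding lex_pos_def
    using k l by (intro exI[of _ "min k l"]) (cases "k \<le> l"; auto simp: min_def le_less add_pos_nonneg)
qed

lemma lex_pos_sum:
  assumes "finite K" "K \<noteq> {}" "\<And>k. k \<in> K \<Longrightarrow> lex_pos (d k)"
  shows "lex_pos (\<lambda>j. \<Sum>k\<in>K. d k j)"
  using assms
proof (induction K rule: finite_ne_induct)
  case (insert x F)
  then show ?case using lex_pos_add[of "d x" "\<lambda>j. \<Sum>k\<in>F. d k j"] by simp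
qed simp

lemma lex_pos_nonzero: "lex_pos d \<Longrightarrow> d \<noteq> (\<lambda>_. 0)"
  unfolding lex_pos_def by force

lemma lex_pos_or_lex_pos_uminus:
  assumes "d \<noteq> (\<lambda>_. 0)"
  shows "lex_pos d \<or> lex_pos (\<lambda>j. - d j)"
proof -
  define k where "k = (LEAST j. d j \<noteq> 0)"
  have "d k \<noteq> 0" unfolding k_def using assms by (metis (mono_tags) LeastI)
  moreover have "\<forall>j<k. d j = 0" unfolding k_def using not_less_Least by blast
  ultimately show ?thesis
    unfolding lex_pos_def by (cases "d k > 0") (auto intro!: exI[of _ k])
qed

definition cube_point :: "(nat \<Rightarrow> nat \<Rightarrow> int) \<Rightarrow> (nat \<Rightarrow> nat \<Rightarrow> int) \<Rightarrow> nat \<Rightarrow> nat set \<Rightarrow> nat \<Rightarrow> int" where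
  "cube_point a b m S = (\<lambda>j. \<Sum>k<m. if k \<in> S then b k j else a k j)"

lemma cube_point_eq:
  assumes "S \<subseteq> {..<m}"
  shows "cube_point a b m S j = (\<Sum>k<m. a k j) + (\<Sum>k\<in>S. b k j - a k j)"
proof -
  have "cube_point a b m S j = (\<Sum>k<m. a k j + (if k \<in> S then b k j - a k j else 0))"
    unfolding cube_point_def by (rule sum.cong) auto
  also have "\<dots> = (\<Sum>k<m. a k j) + (\<Sum>k\<in>S. b k j - a k j)"
    using assms by (simp add: sum.distrib sum.If_cases Int_absorb1)
  finally show ?thesis .
qed

lemma cube_point_eq_top_iff:
  assumes "S \<subseteq> {..<m}" and lex: "\<And>k. k < m \<Longrightarrow> lex_pos (\<lambda>j. b k j - a k j)"
  shows "cube_point a b m S = cube_point a b m {..<m} \<longleftrightarrow> S = {..<m}"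
proof
  assume eq: "cube_point a b m S = cube_point a b m {..<m}"
  show "S = {..<m}"
  proof (rule ccontr)
    assume "S \<noteq> {..<m}"
    then have "lex_pos (\<lambda>j. \<Sum>k\<in>{..<m} - S. b k j - a k j)"
      using assms(1) lex by (intro lex_pos_sum) auto
    moreover have "(\<lambda>j. \<Sum>k\<in>{..<m} - S. b k j - a k j) = (\<lambda>_. 0)"
      using eq assms(1) by (auto simp: fun_eq_iff cube_point_eq sum_diff)
    ultimately show False using lex_pos_nonzero by blast
  qed
qed simp

lemma laurent_monomial_cube_point:
  assumes "S \<subseteq> {..<m}" "x \<in> torus n"
  shows "laurent_monomial n (cube_point a b m S) x
           = (\<Prod>k<m. laurent_monomial n (a k) x) * (\<Prod>k\<in>S. laurent_monomial n (\<lambda>j. b k j - a k j) x)"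
proof -
  have "cube_point a b m S = (\<lambda>j. (\<Sum>k<m. a k j) + (\<Sum>k\<in>S. b k j - a k j))"
    using assms(1) by (simp add: fun_eq_iff cube_point_eq)
  then show ?thesis
    using assms(2) by (simp add: laurent_monomial_add laurent_monomial_sum)
qed

lemma card_field_ge_2: "2 \<le> card (UNIV :: 'a::{field,finite} set)"
proof -
  have "card {0::'a, 1} \<le> card (UNIV :: 'a set)" by (rule card_mono) auto
  then show ?thesis by simp
qed

lemma exists_const_few_neq:
  fixes y :: "'b \<Rightarrow> 'a::{field,finite}"
  assumes "finite X" "\<And>x. x \<in> X \<Longrightarrow> y x \<noteq> 0"
  shows "\<exists>c. real (card {x\<in>X. y x \<noteq> c})
               \<le> (1 - 1 / (real (card (UNIV :: 'a set)) - 1)) * real (card X)"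
proof -
  have q: "real (card (UNIV :: 'a set)) - 1 \<ge> 1" using card_field_ge_2[where 'a='a] by simp
  have "UNIV - {0::'a} \<noteq> {}" using one_neq_zero by blast
  then obtain c where c: "card X \<le> card (y -` {c} \<inter> X) * card (UNIV - {0::'a})"
    using pigeonhole_card[of y X "UNIV - {0}"] assms by (auto simp: Pi_def)
  have "card {x\<in>X. y x \<noteq> c} = card X - card (y -` {c} \<inter> X)"
    using assms(1) by (subst card_Diff_subset[symmetric]) (auto intro: arg_cong[where f = card])
  moreover have "real (card X) \<le> real (card (y -` {c} \<inter> X)) * (real (card (UNIV :: 'a set)) - 1)"
  proof -
    have "real (card X) \<le> real (card (y -` {c} \<inter> X) * (card (UNIV :: 'a set) - 1))"
      using c unfolding of_nat_le_iff by (simp add: card_Diff_singleton)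
    then show ?thesis using card_field_ge_2[where 'a='a] by (simp add: of_nat_diff)
  qed
  moreover have "card (y -` {c} \<inter> X) \<le> card X"
    using assms(1) by (intro card_mono) auto
  ultimately show ?thesis
    using q by (intro exI[of _ c]) (simp add: of_nat_diff field_simps)
qed

text \<open>Choosing the constants one at a time: each new factor kills at least a
  \<open>1/(q-1)\<close> fraction of the points where the previous factors do not vanish.\<close>
lemma exists_consts_few_nonzeros:
  fixes Y :: "nat \<Rightarrow> 'b \<Rightarrow> 'a::{field,finite}"
  assumes "finite X" "\<And>k x. x \<in> X \<Longrightarrow> Y k x \<noteq> 0"
  shows "\<exists>\<gamma>. real (card {x\<in>X. (\<Prod>k<m. Y k x - \<gamma> k) \<noteq> 0})
            \<le> (1 - 1 / (real (card (UNIV :: 'a set)) - 1)) ^ m * real (card X)"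
proof -
  define r where "r = 1 - 1 / (real (card (UNIV :: 'a set)) - 1)"
  have "r \<ge> 0" using card_field_ge_2[where 'a='a] by (simp add: r_def)
  have "\<exists>\<gamma>. real (card {x\<in>X. (\<Prod>k<m. Y k x - \<gamma> k) \<noteq> 0}) \<le> r ^ m * real (card X)"
  proof (induction m)
    case 0
    then show ?case using assms(1) by (auto intro: card_mono)
  next
    case (Suc m)
    then obtain \<gamma> where \<gamma>: "real (card {x\<in>X. (\<Prod>k<m. Y k x - \<gamma> k) \<noteq> 0}) \<le> r ^ m * real (card X)"
      by blast
    define A where "A = {x\<in>X. (\<Prod>k<m. Y k x - \<gamma> k) \<noteq> 0}"
    obtain c where c: "real (card {x\<in>A. Y m x \<noteq> c}) \<le> r * real (card A)"
      using exists_const_few_neq[of A "Y m"] assms unfolding A_def r_def by auto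
    have "(\<Prod>k<m. Y k x - (\<gamma>(m := c)) k) = (\<Prod>k<m. Y k x - \<gamma> k)" for x
      by (rule prod.cong) auto
    then have "{x\<in>X. (\<Prod>k<Suc m. Y k x - (\<gamma>(m := c)) k) \<noteq> 0} = {x\<in>A. Y m x \<noteq> c}"
      by (auto simp: A_def)
    moreover have "r * real (card A) \<le> r ^ Suc m * real (card X)"
      using mult_left_mono[OF \<gamma> \<open>r \<ge> 0\<close>] by (simp add: A_def mult.assoc)
    ultimately show ?case
      using c by (intro exI[of _ "\<gamma>(m := c)"]) simp
  qed
  then show ?thesis unfolding r_def .
qed

lemma bij_betw_torus_PiE:
  "bij_betw (\<lambda>x. restrict x {..<n}) (torus n :: (nat \<Rightarrow> 'a::field) set) (PiE {..<n} (\<lambda>_. UNIV - {0}))"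
  by (rule bij_betw_byWitness[where f' = "\<lambda>f j. if j < n then f j else 1"])
     (auto simp: torus_def PiE_def extensional_def fun_eq_iff)

lemma finite_torus: "finite (torus n :: (nat \<Rightarrow> 'a::{field,finite}) set)"
  using bij_betw_finite[OF bij_betw_torus_PiE[where 'a='a], of n] finite_PiE[of "{..<n}" "\<lambda>_. UNIV - {0::'a}"]
  by simp

lemma card_torus: "card (torus n :: (nat \<Rightarrow> 'a::{field,finite}) set) = (card (UNIV :: 'a set) - 1) ^ n"
  using bij_betw_same_card[OF bij_betw_torus_PiE] by (simp add: card_PiE card_Diff_singleton)

lemma zero_count_le_toric_N:
  fixes T :: "'a::{field,finite} itself" and c :: "(nat \<Rightarrow> int) \<Rightarrow> 'a"
  assumes "p \<in> lattice_points n P" "c p \<noteq> 0"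
  shows "zero_count n P c \<le> toric_N T n P"
  unfolding toric_N_def
proof (rule cSup_upper)
  show "bdd_above {zero_count n P (c :: (nat \<Rightarrow> int) \<Rightarrow> 'a) | c. \<exists>p\<in>lattice_points n P. c p \<noteq> 0}"
    by (rule bdd_aboveI[of _ "card (torus n :: (nat \<Rightarrow> 'a) set)"])
       (auto simp: zero_count_def intro!: card_mono finite_torus)
qed (use assms in blast)

text \<open>The coefficients of \<open>x^(a_0 + ... + a_(m-1)) * prod_k (x^(b_k - a_k) - \<gamma>_k)\<close>,
  obtained by expanding the product over the subsets \<open>S\<close> of factors contributing \<open>x^(b_k - a_k)\<close>.\<close>
definition cube_coeff ::
    "(nat \<Rightarrow> nat \<Rightarrow> int) \<Rightarrow> (nat \<Rightarrow> nat \<Rightarrow> int) \<Rightarrow> nat \<Rightarrow> (nat \<Rightarrow> 'a::field) \<Rightarrow> (nat \<Rightarrow> int) \<Rightarrow> 'a" where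
  "cube_coeff a b m \<gamma> p = (\<Sum>S\<in>{S\<in>Pow {..<m}. cube_point a b m S = p}. \<Prod>k\<in>{..<m} - S. - \<gamma> k)"

lemma cube_coeff_top:
  assumes "\<And>k. k < m \<Longrightarrow> lex_pos (\<lambda>j. b k j - a k j)"
  shows "cube_coeff a b m \<gamma> (cube_point a b m {..<m}) = 1"
proof -
  have "{S\<in>Pow {..<m}. cube_point a b m S = cube_point a b m {..<m}} = {{..<m}}"
    using cube_point_eq_top_iff[OF _ assms] by auto
  then show ?thesis by (simp add: cube_coeff_def)
qed

lemma toric_eval_cube_coeff:
  assumes fin: "finite (lattice_points n P)"
    and nonneg: "\<And>p j. p \<in> lattice_points n P \<Longrightarrow> j < n \<Longrightarrow> 0 \<le> p j"
    and cube: "\<And>S. S \<subseteq> {..<m} \<Longrightarrow> cube_point a b m S \<in> lattice_points n P"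
    and x: "x \<in> torus n"
  shows "toric_eval n P (cube_coeff a b m \<gamma>) x
           = (\<Prod>k<m. laurent_monomial n (a k) x)
             * (\<Prod>k<m. laurent_monomial n (\<lambda>j. b k j - a k j) x - \<gamma> k)"
proof -
  define coef where "coef S = (\<Prod>k\<in>{..<m} - S. - \<gamma> k)" for S
  define Y where "Y k = laurent_monomial n (\<lambda>j. b k j - a k j) x" for k
  have "toric_eval n P (cube_coeff a b m \<gamma>) x
          = (\<Sum>p\<in>lattice_points n P. \<Sum>S\<in>{S\<in>Pow {..<m}. cube_point a b m S = p}.
               coef S * laurent_monomial n (cube_point a b m S) x)"
    by (subst toric_eval_eq_laurent)
       (use nonneg in \<open>auto simp: cube_coeff_def coef_def sum_distrib_right intro!: sum.cong\<close>)
  also have "\<dots> = (\<Sum>S\<in>Pow {..<m}. coef S * laurent_monomial n (cube_point a b m S) x)"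
    by (rule sum.group) (use fin cube in auto)
  also have "\<dots> = (\<Sum>S\<in>Pow {..<m}. (\<Prod>k<m. laurent_monomial n (a k) x) * ((\<Prod>k\<in>S. Y k) * coef S))"
    by (intro sum.cong refl) (simp add: laurent_monomial_cube_point x Y_def)
  also have "\<dots> = (\<Prod>k<m. laurent_monomial n (a k) x) * (\<Prod>k<m. Y k + - \<gamma> k)"
    unfolding prod_add[OF finite_lessThan] sum_distrib_left coef_def ..
  finally show ?thesis by (simp add: Y_def)
qed

lemma toric_N_ge_cube:
  fixes T :: "'a::{field,finite} itself"
  assumes fin: "finite (lattice_points n P)"
    and nonneg: "\<And>p j. p \<in> lattice_points n P \<Longrightarrow> j < n \<Longrightarrow> 0 \<le> p j"
    and cube: "\<And>S. S \<subseteq> {..<m} \<Longrightarrow> cube_point a b m S \<in> lattice_points n P"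
    and lex: "\<And>k. k < m \<Longrightarrow> lex_pos (\<lambda>j. b k j - a k j)"
  shows "(1 - (1 - 1 / (real (card (UNIV :: 'a set)) - 1)) ^ m)
           * (real (card (UNIV :: 'a set)) - 1) ^ n \<le> real (toric_N T n P)"
proof -
  define r where "r = 1 - 1 / (real (card (UNIV :: 'a set)) - 1)"
  define Y where "Y k x = laurent_monomial n (\<lambda>j. b k j - a k j) x" for k and x :: "nat \<Rightarrow> 'a"
  define X where "X = (torus n :: (nat \<Rightarrow> 'a) set)"
  have card_X: "real (card X) = (real (card (UNIV :: 'a set)) - 1) ^ n"
    using card_field_ge_2[where 'a='a] by (simp add: X_def card_torus of_nat_diff)
  obtain \<gamma> where \<gamma>: "real (card {x\<in>X. (\<Prod>k<m. Y k x - \<gamma> k) \<noteq> 0}) \<le> r ^ m * real (card X)"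
    using exists_consts_few_nonzeros[where X = X and Y = Y and m = m]
      finite_torus laurent_monomial_nonzero
    unfolding X_def Y_def r_def by blast
  define c where "c = cube_coeff a b m \<gamma>"
  have "toric_eval n P c x = (\<Prod>k<m. laurent_monomial n (a k) x) * (\<Prod>k<m. Y k x - \<gamma> k)"
    if "x \<in> X" for x
    unfolding c_def Y_def by (rule toric_eval_cube_coeff) (use fin nonneg cube that X_def in auto)
  then have zeros: "{x\<in>X. toric_eval n P c x = 0} = X - {x\<in>X. (\<Prod>k<m. Y k x - \<gamma> k) \<noteq> 0}"
    using laurent_monomial_nonzero by (auto simp: X_def) blast
  have "finite X" by (simp add: X_def finite_torus)
  then have "card {x\<in>X. (\<Prod>k<m. Y k x - \<gamma> k) \<noteq> 0} \<le> card X" by (intro card_mono) auto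
  with \<open>finite X\<close> have "real (zero_count n P c)
      = real (card X) - real (card {x\<in>X. (\<Prod>k<m. Y k x - \<gamma> k) \<noteq> 0})"
    unfolding zero_count_def X_def[symmetric] zeros
    by (subst card_Diff_subset) (auto simp: of_nat_diff)
  also have "\<dots> \<ge> (1 - r ^ m) * real (card X)"
    using \<gamma> by (simp add: algebra_simps)
  finally have "(1 - r ^ m) * real (card X) \<le> real (zero_count n P c)" .
  also have "zero_count n P c \<le> toric_N T n P"
    using cube[of "{..<m}"] cube_coeff_top[of m b a \<gamma>] lex by (intro zero_count_le_toric_N) (auto simp: c_def)
  finally show ?thesis unfolding card_X r_def by simp
qed

lemma lattice_points_in_box_nonneg:
  assumes "in_box q n P" "p \<in> lattice_points n P" "j < n"
  shows "0 \<le> p j"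
  using assms by (auto simp: in_box_def lattice_points_def real_pt_def)

lemma finite_lattice_points_in_box:
  assumes "in_box q n P"
  shows "finite (lattice_points n P)"
proof (rule finite_subset)
  show "lattice_points n P \<subseteq> (\<lambda>f j. if j < n then f j else 0) ` PiE {..<n} (\<lambda>_. {0..int q - 2})"
  proof
    fix p assume p: "p \<in> lattice_points n P"
    have "p j \<in> {0..int q - 2}" if "j < n" for j
    proof -
      have "0 \<le> real_of_int (p j) \<and> real_of_int (p j) \<le> real_of_int (int q - 2)"
        using assms p that by (auto simp: in_box_def lattice_points_def real_pt_def)
      then show ?thesis by simp
    qed
    then have "restrict p {..<n} \<in> PiE {..<n} (\<lambda>_. {0..int q - 2})" by simp
    moreover have "p = (\<lambda>j. if j < n then restrict p {..<n} j else 0)"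
      using p by (auto simp: lattice_points_def supp_in_def)
    ultimately show "p \<in> (\<lambda>f j. if j < n then f j else 0) ` PiE {..<n} (\<lambda>_. {0..int q - 2})"
      by blast
  qed
qed (auto intro: finite_PiE)

lemma real_pt_in_conv_hull_pts:
  assumes "finite V" "v \<in> V"
  shows "real_pt v \<in> conv_hull_pts V"
  unfolding conv_hull_pts_def
proof (intro CollectI exI[of _ "\<lambda>w. if w = v then 1 else 0"] conjI)
  show "real_pt v = (\<lambda>j. \<Sum>w\<in>V. (if w = v then 1 else 0) * real_of_int (w j))"
  proof
    fix j
    have "(\<Sum>w\<in>V. (if w = v then 1 else 0) * real_of_int (w j)) = (\<Sum>w\<in>V. if w = v then real_of_int (w j) else 0)"
      by (rule sum.cong) auto
    then show "real_pt v j = (\<Sum>w\<in>V. (if w = v then 1 else 0) * real_of_int (w j))"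
      using assms by (simp add: real_pt_def)
  qed
qed (use assms in auto)

lemma conv_hull_pts_singleton: "conv_hull_pts {v} = {real_pt v}"
  using real_pt_in_conv_hull_pts[of "{v}" v] by (auto simp: conv_hull_pts_def real_pt_def)

lemma lattice_polytope_pos_dim_lex_pos_pair:
  assumes "lattice_polytope n Q" "pos_dim Q"
  shows "\<exists>u w. supp_in n u \<and> supp_in n w \<and> real_pt u \<in> Q \<and> real_pt w \<in> Q \<and> lex_pos (\<lambda>j. w j - u j)"
proof -
  obtain V where V: "finite V" "V \<noteq> {}" "\<forall>v\<in>V. supp_in n v" "Q = conv_hull_pts V"
    using assms(1) unfolding lattice_polytope_def by blast
  obtain v0 v1 where v: "v0 \<in> V" "v1 \<in> V" "v0 \<noteq> v1"
  proof -
    obtain v0 where "v0 \<in> V" using V(2) by blast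
    moreover have "V \<noteq> {v0}"
      using assms(2) V(4) by (auto simp: pos_dim_def conv_hull_pts_singleton)
    ultimately show thesis using that by blast
  qed
  then have "(\<lambda>j. v1 j - v0 j) \<noteq> (\<lambda>_. 0)" by (metis (no_types) ext eq_iff_diff_eq_0)
  then consider "lex_pos (\<lambda>j. v1 j - v0 j)" | "lex_pos (\<lambda>j. v0 j - v1 j)"
    using lex_pos_or_lex_pos_uminus by fastforce
  then show ?thesis
    using v V(1,3,4) real_pt_in_conv_hull_pts by cases blast+
qed

lemma real_pt_sum_in_msum:
  assumes "\<And>k. k < length Ps \<Longrightarrow> real_pt (f k) \<in> Ps ! k"
  shows "real_pt (\<lambda>j. \<Sum>k<length Ps. f k j) \<in> msum Ps"
  using assms
proof (induction Ps arbitrary: f)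
  case Nil
  then show ?case by (simp add: real_pt_def)
next
  case (Cons Q Ps)
  have "real_pt (\<lambda>j. \<Sum>k<length Ps. f (Suc k) j) \<in> msum Ps"
    using Cons.IH[of "\<lambda>k. f (Suc k)"] Cons.prems by fastforce
  moreover have "real_pt (f 0) \<in> Q" using Cons.prems[of 0] by simp
  moreover have "real_pt (\<lambda>j. \<Sum>k<length (Q # Ps). f k j)
                  = (\<lambda>j. real_pt (f 0) j + real_pt (\<lambda>j. \<Sum>k<length Ps. f (Suc k) j) j)"
    by (simp only: real_pt_def length_Cons sum.lessThan_Suc_shift of_int_add)
  ultimately show ?case by auto
qed

lemma exists_cube_in_msum:
  assumes "\<And>Q. Q \<in> set Ps \<Longrightarrow> lattice_polytope n Q \<and> pos_dim Q"
  shows "\<exists>a b. (\<forall>k<length Ps. supp_in n (a k) \<and> supp_in n (b k) \<and> lex_pos (\<lambda>j. b k j - a k j))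
             \<and> (\<forall>S. real_pt (cube_point a b (length Ps) S) \<in> msum Ps)"
proof -
  have "\<forall>k. \<exists>u w. k < length Ps \<longrightarrow> supp_in n u \<and> supp_in n w \<and> real_pt u \<in> Ps ! k
                   \<and> real_pt w \<in> Ps ! k \<and> lex_pos (\<lambda>j. w j - u j)"
    using assms lattice_polytope_pos_dim_lex_pos_pair by (metis nth_mem)
  then obtain a b where ab: "\<And>k. k < length Ps \<Longrightarrow> supp_in n (a k) \<and> supp_in n (b k)
      \<and> real_pt (a k) \<in> Ps ! k \<and> real_pt (b k) \<in> Ps ! k \<and> lex_pos (\<lambda>j. b k j - a k j)"
    by metis
  have "real_pt (cube_point a b (length Ps) S) \<in> msum Ps" for S
  proof -
    have "real_pt (\<lambda>j. \<Sum>k<length Ps. (if k \<in> S then b k else a k) j) \<in> msum Ps"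
      by (rule real_pt_sum_in_msum) (use ab in auto)
    moreover have "(\<lambda>j. \<Sum>k<length Ps. (if k \<in> S then b k else a k) j) = cube_point a b (length Ps) S"
      by (auto simp: cube_point_def intro!: sum.cong)
    ultimately show ?thesis by simp
  qed
  then show ?thesis using ab by blast
qed

lemma supp_in_cube_point:
  assumes "\<And>k. k < m \<Longrightarrow> supp_in n (a k) \<and> supp_in n (b k)"
  shows "supp_in n (cube_point a b m S)"
  using assms unfolding supp_in_def cube_point_def by (auto intro!: sum.neutral)

text \<open>The bound \<open>0 < l\<close> is needed: \<open>Sup\<close> of an unbounded set of naturals is \<open>0\<close>.\<close>
lemma nat_le_Sup_imp_ex_ge:
  assumes "0 < (l::nat)" "l \<le> Sup X"
  shows "\<exists>x\<in>X. l \<le> x"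
proof (rule ccontr)
  assume "\<not> ?thesis"
  then have "X \<noteq> {}" "\<And>x. x \<in> X \<Longrightarrow> x \<le> l - 1" using assms by (auto simp: Sup_nat_def)
  then have "Sup X \<le> l - 1" by (intro cSup_least)
  then show False using assms by simp
qed

lemma exists_minkowski_summands:
  assumes "0 < l" "l \<le> full_minkowski_length n P"
  shows "\<exists>Ps. l \<le> length Ps \<and> (\<forall>Q\<in>set Ps. lattice_polytope n Q \<and> pos_dim Q) \<and> msum Ps \<subseteq> P"
proof -
  obtain Q where Q: "Q \<subseteq> P" "l \<le> minkowski_length n Q"
    using nat_le_Sup_imp_ex_ge[OF assms(1) assms(2)[unfolded full_minkowski_length_def]] by blast
  then obtain Ps where "l \<le> length Ps" "\<forall>Q\<in>set Ps. lattice_polytope n Q \<and> pos_dim Q" "Q = msum Ps"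
    using nat_le_Sup_imp_ex_ge[OF assms(1)] unfolding minkowski_length_def by blast
  then show ?thesis using Q(1) by blast
qed

lemma toric_delta_le_power:
  fixes T :: "'a::{field,finite} itself"
  assumes box: "in_box (card (UNIV :: 'a set)) n P"
    and "0 < l" "l \<le> full_minkowski_length n P"
  shows "toric_delta T n P \<le> (1 - 1 / (real (card (UNIV :: 'a set)) - 1)) ^ l"
proof -
  define q where "q = real (card (UNIV :: 'a set)) - 1"
  define r where "r = 1 - 1 / q"
  have "q \<ge> 1" using card_field_ge_2[where 'a='a] by (simp add: q_def)
  then have "0 \<le> r" "r \<le> 1" "q ^ n > 0" by (auto simp: r_def)
  obtain Ps where Ps: "l \<le> length Ps" "\<forall>Q\<in>set Ps. lattice_polytope n Q \<and> pos_dim Q" "msum Ps \<subseteq> P"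
    using exists_minkowski_summands[OF assms(2,3)] by blast
  define m where "m = length Ps"
  obtain a b where ab: "\<forall>k<m. supp_in n (a k) \<and> supp_in n (b k) \<and> lex_pos (\<lambda>j. b k j - a k j)"
    and cube: "\<And>S. real_pt (cube_point a b m S) \<in> msum Ps"
    using exists_cube_in_msum[of Ps n] Ps(2) unfolding m_def by blast
  have "(1 - r ^ m) * q ^ n \<le> real (toric_N T n P)"
    unfolding r_def q_def
  proof (rule toric_N_ge_cube)
    show "cube_point a b m S \<in> lattice_points n P" for S
      using supp_in_cube_point[of m n a b S] ab cube[of S] Ps(3) by (auto simp: lattice_points_def)
  qed (use ab finite_lattice_points_in_box[OF box] lattice_points_in_box_nonneg[OF box] in auto)
  then have "toric_delta T n P \<le> r ^ m"
    using \<open>q ^ n > 0\<close> by (simp add: toric_delta_def flip: q_def) (simp add: divide_le_eq algebra_simps)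
  also have "\<dots> \<le> r ^ l"
    using \<open>0 \<le> r\<close> \<open>r \<le> 1\<close> Ps(1) by (simp add: m_def power_decreasing)
  finally show ?thesis unfolding r_def q_def .
qed

lemma frequently_ge_if_unbounded:
  fixes L :: "nat \<Rightarrow> nat"
  assumes "\<not> bdd_above (range L)"
  shows "\<exists>\<^sub>F i in sequentially. l \<le> L i"
proof (rule ccontr)
  assume "\<not> ?thesis"
  then obtain N where "\<And>i. N \<le> i \<Longrightarrow> L i < l"
    by (auto simp: not_frequently eventually_sequentially not_le)
  then have "L i \<in> L ` {..<N} \<union> {..<l}" for i
    by (cases "i < N") auto
  then have "range L \<subseteq> L ` {..<N} \<union> {..<l}"
    by blast
  then have "bdd_above (range L)"
    by (meson bdd_above_finite bdd_above_mono finite_Un finite_imageI finite_lessThan)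
  with assms show False ..
qed

lemma tendsto_zero_if_le_power_of_unbounded:
  fixes X :: "nat \<Rightarrow> real" and L :: "nat \<Rightarrow> nat"
  assumes lim: "X \<longlonglongrightarrow> x" and "0 \<le> x" and unbdd: "\<not> bdd_above (range L)"
    and r: "0 \<le> r" "r < 1" and le: "\<And>i l. 0 < l \<Longrightarrow> l \<le> L i \<Longrightarrow> X i \<le> r ^ l"
  shows "x = 0"
proof -
  have "x \<le> r ^ Suc l" for l
  proof (rule ccontr)
    assume "\<not> x \<le> r ^ Suc l"
    have "\<exists>\<^sub>F i in sequentially. X i \<le> r ^ Suc l"
      using frequently_ge_if_unbounded[OF unbdd, of "Suc l"] by (rule frequently_elim1) (rule le, simp)
    moreover have "\<forall>\<^sub>F i in sequentially. r ^ Suc l < X i"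
      using order_tendstoD(1)[OF lim] \<open>\<not> x \<le> r ^ Suc l\<close> by simp
    ultimately have "\<exists>\<^sub>F i in sequentially. X i \<le> r ^ Suc l \<and> r ^ Suc l < X i"
      by (rule frequently_eventually_frequently)
    then have "\<exists>\<^sub>F i in sequentially. False"
      by (rule frequently_elim1) linarith
    then show False by simp
  qed
  moreover have "(\<lambda>l. r ^ Suc l) \<longlonglongrightarrow> 0"
    by (rule LIMSEQ_Suc[OF LIMSEQ_power_zero]) (use r in simp)
  ultimately have "x \<le> 0"
    by (intro tendsto_lowerbound[of "\<lambda>l. r ^ Suc l"]) auto
  with \<open>0 \<le> x\<close> show ?thesis by simp
qed

theorem mainTheorem14:
  fixes T :: "'a::{field,finite} itself"
    and n :: "nat \<Rightarrow> nat" and P :: "nat \<Rightarrow> (nat \<Rightarrow> real) set"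
    and \<delta> R :: real
  assumes poly: "\<And>i. lattice_polytope (n i) (P i)"
    and box: "\<And>i. in_box (card (UNIV :: 'a set)) (n i) (P i)"
    and dim: "filterlim n at_top sequentially"
    and \<delta>_lim: "(\<lambda>i. toric_delta T (n i) (P i)) \<longlonglongrightarrow> \<delta>"
    and R_lim: "(\<lambda>i. toric_rate T (n i) (P i)) \<longlonglongrightarrow> R"
    and \<delta>_range: "\<delta> \<in> {0..1}" and R_range: "R \<in> {0..1}"
    and unbdd: "\<not> bdd_above (range (\<lambda>i. full_minkowski_length (n i) (P i)))"
  shows "(\<lambda>i. toric_delta T (n i) (P i)) \<longlonglongrightarrow> 0"
proof -
  have "real (card (UNIV :: 'a set)) - 1 \<ge> 1" using card_field_ge_2[where 'a='a] by simp
  then have "\<delta> = 0"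
    using \<delta>_range toric_delta_le_power[OF box]
    by (intro tendsto_zero_if_le_power_of_unbounded[OF \<delta>_lim _ unbdd,
          where r = "1 - 1 / (real (card (UNIV :: 'a set)) - 1)"]) auto
  with \<delta>_lim show ?thesis by simp
qed

end
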